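(* Let $U\subset\mathbb R^m$ be open and $U_1\subset\subset U$ a bounded open set. Assume: (i) $D_df_x(u)$ exists for all $x\in X$, $u\in U$ and unit $d\in\mathbb R^m$; (ii) for every $\bar u\in\overline{U_1}$ and all sequences $\{d_n\}\subset\mathbb R^m$, $\{u_n\}\subset U_1$ with $|d_n|=1$ and $u_n\to\bar u$, there is a subsequence (not relabeled) along which $\inf_{x\in S(u_n)}D_{d_n}f_x(u_n)-\inf_{x\in S(\bar u)}D_{d_n}f_x(\bar u)\to0$; (iii) $w_1,w_2\in C(\overline{U_1})$ are, respectively, a viscosity subsolution and a viscosity supersolution in $U_1$ of $-\nabla w(u)\cdot d+\inf_{x\in S(u)}D_df_x(u)=0$ for every unit $d\in\mathbb R^m$, and $w_1\le w_2$ on $\partial U_1$. Then $w_1\le w_2$ in $U_1$.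
   Context: $\mathfrak X$ real Banach space, $X\subset\mathfrak X$ nonempty, $f:X\times U\to\mathbb R$, $\Phi:U\to2^X$, $v(u)=\inf_{x\in\Phi(u)}f(x,u)$, $S(u)=\{x\in\Phi(u):f(x,u)=v(u)\}$, $f_x(u)=f(x,u)$, $D_df_x(u)=\lim_{s\downarrow0}\frac{f(x,u+sd)-f(x,u)}{s}$; $\inf\emptyset=+\infty$. $V\subset\subset U$ means $\overline V\subset U$. For $w$ on an open set and $u_0$ in it: $\mathcal J^+w(u_0)=\{p\in\mathbb R^m:\limsup_{u\to u_0}\frac{w(u)-w(u_0)-p\cdot(u-u_0)}{|u-u_0|}\le0\}$, $\mathcal J^-w(u_0)$ analogous with $\liminf\ge0$. For fixed unit $d$, $w$ is a viscosity subsolution (supersolution) of $-\nabla w(u)\cdot d+\inf_{x\in S(u)}D_df_x(u)=0$ in an open set $V$ if $w$ is upper (lower) semicontinuous and at every $u_0\in V$, $-\eta\cdot d+\inf_{x\in S(u_0)}D_df_x(u_0)\le0$ for all $\eta\in\mathcal J^+w(u_0)$ (resp. $\ge0$ for all $\eta\in\mathcal J^-w(u_0)$). *)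

theory Defs
  imports "HOL-Analysis.Analysis" "HOL-Library.Liminf_Limsup"
begin

text \<open>Value function v(u) = inf over Phi(u) of f(x,u), with inf of the empty set = +infinity.\<close>
definition valfun :: "('x \<Rightarrow> 'u \<Rightarrow> real) \<Rightarrow> ('u \<Rightarrow> 'x set) \<Rightarrow> 'u \<Rightarrow> ereal" where
  "valfun f Phi u = (INF x\<in>Phi u. ereal (f x u))"

definition solset :: "('x \<Rightarrow> 'u \<Rightarrow> real) \<Rightarrow> ('u \<Rightarrow> 'x set) \<Rightarrow> 'u \<Rightarrow> 'x set" where
  "solset f Phi u = {x \<in> Phi u. ereal (f x u) = valfun f Phi u}"

definition dirderiv :: "('x \<Rightarrow> 'u::real_normed_vector \<Rightarrow> real) \<Rightarrow> 'x \<Rightarrow> 'u \<Rightarrow> 'u \<Rightarrow> real" where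
  "dirderiv f x u d = Lim (at_right 0) (\<lambda>s::real. (f x (u + s *\<^sub>R d) - f x u) / s)"

text \<open>inf over S(u) of D_d f_x(u), inf of empty set = +infinity.\<close>
definition hamil :: "('x \<Rightarrow> 'u::real_normed_vector \<Rightarrow> real) \<Rightarrow> ('u \<Rightarrow> 'x set) \<Rightarrow> 'u \<Rightarrow> 'u \<Rightarrow> ereal" where
  "hamil f Phi u d = (INF x\<in>solset f Phi u. ereal (dirderiv f x u d))"

definition superjet :: "('u::real_inner \<Rightarrow> real) \<Rightarrow> 'u \<Rightarrow> 'u set" where
  "superjet w u0 = {p. Limsup (at u0) (\<lambda>u. ereal ((w u - w u0 - p \<bullet> (u - u0)) / norm (u - u0))) \<le> 0}"

definition subjet :: "('u::real_inner \<Rightarrow> real) \<Rightarrow> 'u \<Rightarrow> 'u set" where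
  "subjet w u0 = {p. Liminf (at u0) (\<lambda>u. ereal ((w u - w u0 - p \<bullet> (u - u0)) / norm (u - u0))) \<ge> 0}"

definition usc_at :: "('u::topological_space \<Rightarrow> real) \<Rightarrow> 'u \<Rightarrow> bool" where
  "usc_at w u0 \<longleftrightarrow> Limsup (at u0) (\<lambda>u. ereal (w u)) \<le> ereal (w u0)"

definition lsc_at :: "('u::topological_space \<Rightarrow> real) \<Rightarrow> 'u \<Rightarrow> bool" where
  "lsc_at w u0 \<longleftrightarrow> Liminf (at u0) (\<lambda>u. ereal (w u)) \<ge> ereal (w u0)"

definition visc_sub ::
  "('x \<Rightarrow> 'u::real_inner \<Rightarrow> real) \<Rightarrow> ('u \<Rightarrow> 'x set) \<Rightarrow> 'u \<Rightarrow> 'u set \<Rightarrow> ('u \<Rightarrow> real) \<Rightarrow> bool" where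
  "visc_sub f Phi d V w \<longleftrightarrow> (\<forall>u0\<in>V. usc_at w u0) \<and>
     (\<forall>u0\<in>V. \<forall>\<eta>\<in>superjet w u0. - ereal (\<eta> \<bullet> d) + hamil f Phi u0 d \<le> 0)"

definition visc_super ::
  "('x \<Rightarrow> 'u::real_inner \<Rightarrow> real) \<Rightarrow> ('u \<Rightarrow> 'x set) \<Rightarrow> 'u \<Rightarrow> 'u set \<Rightarrow> ('u \<Rightarrow> real) \<Rightarrow> bool" where
  "visc_super f Phi d V w \<longleftrightarrow> (\<forall>u0\<in>V. lsc_at w u0) \<and>
     (\<forall>u0\<in>V. \<forall>\<eta>\<in>subjet w u0. - ereal (\<eta> \<bullet> d) + hamil f Phi u0 d \<ge> 0)"

end

theory Submission
  imports Defs
begin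

(* Comparison by doubling the variables. If w1 - w2 had a positive maximum in U1, maximise
   w1 x - \<delta> e\<bullet>x - w2 y - n |x - y|^2 over the closure of U1. The tilt \<delta> e\<bullet>x is small
   enough that a subsequence of the maximisers (x_n, y_n) converges to a diagonal point (ub, ub)
   with ub in U1. Touching by paraboloids gives the superjet \<delta> e + q_n of w1 at x_n and the
   subjet q_n of w2 at y_n, so the viscosity inequalities in the direction -e separate the
   Hamiltonians: H x_n + \<delta> \<le> H y_n. Condition (ii) with the constant direction -e makes both
   sides converge to the finite value H ub along a subsequence, which is absurd. *)

lemma Limsup_at_le_zero_of_linear_bound:
  fixes h :: "'a::real_normed_vector \<Rightarrow> real"
  assumes "eventually (\<lambda>u. h u \<le> c * norm (u - u0)) (at u0)"
  shows "Limsup (at u0) (\<lambda>u. ereal (h u)) \<le> 0"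
proof (cases "at u0 = bot")
  case False
  have "((\<lambda>u. c * norm (u - u0)) \<longlongrightarrow> c * norm (u0 - u0)) (at u0)"
    by (intro tendsto_intros)
  then have "((\<lambda>u. ereal (c * norm (u - u0))) \<longlongrightarrow> 0) (at u0)"
    by (simp add: zero_ereal_def)
  then have "Limsup (at u0) (\<lambda>u. ereal (c * norm (u - u0))) = 0"
    using False by (intro lim_imp_Limsup) auto
  moreover have "Limsup (at u0) (\<lambda>u. ereal (h u)) \<le> Limsup (at u0) (\<lambda>u. ereal (c * norm (u - u0)))"
    using assms by (intro Limsup_mono) (auto elim: eventually_mono)
  ultimately show ?thesis by simp
qed simp

lemma superjetI:
  fixes w :: "'a::real_inner \<Rightarrow> real"
  assumes "open V" "u0 \<in> V"
    and "\<And>u. u \<in> V \<Longrightarrow> w u - w u0 - p \<bullet> (u - u0) \<le> c * (norm (u - u0))\<^sup>2"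
  shows "p \<in> superjet w u0"
proof -
  have "(w u - w u0 - p \<bullet> (u - u0)) / norm (u - u0) \<le> c * norm (u - u0)"
    if "u \<in> V - {u0}" for u
  proof -
    have "(w u - w u0 - p \<bullet> (u - u0)) / norm (u - u0) \<le> c * (norm (u - u0))\<^sup>2 / norm (u - u0)"
      using assms(3) that by (intro divide_right_mono) auto
    then show ?thesis using that by (simp add: power2_eq_square)
  qed
  then show ?thesis
    unfolding superjet_def
    by (intro CollectI Limsup_at_le_zero_of_linear_bound
        eventually_mono[OF eventually_at_in_open[OF assms(1,2)]])
qed

lemma subjetI:
  fixes w :: "'a::real_inner \<Rightarrow> real"
  assumes "open V" "u0 \<in> V"
    and "\<And>u. u \<in> V \<Longrightarrow> - c * (norm (u - u0))\<^sup>2 \<le> w u - w u0 - p \<bullet> (u - u0)"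
  shows "p \<in> subjet w u0"
proof -
  have "- p \<in> superjet (\<lambda>u. - w u) u0"
  proof (rule superjetI[OF assms(1,2)])
    fix u assume "u \<in> V"
    then show "- w u - - w u0 - - p \<bullet> (u - u0) \<le> c * (norm (u - u0))\<^sup>2"
      using assms(3) by force
  qed
  moreover have "(- w u - - w u0 - - p \<bullet> (u - u0)) / norm (u - u0)
      = - ((w u - w u0 - p \<bullet> (u - u0)) / norm (u - u0))" for u
    by (simp add: minus_divide_left)
  ultimately have "Limsup (at u0) (\<lambda>u. - ereal ((w u - w u0 - p \<bullet> (u - u0)) / norm (u - u0))) \<le> 0"
    unfolding superjet_def by simp
  then show ?thesis
    unfolding subjet_def
    using ereal_Liminf_uminus[of "at u0" "\<lambda>u. - ereal ((w u - w u0 - p \<bullet> (u - u0)) / norm (u - u0))"]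
    by (simp add: ereal_uminus_le_reorder)
qed

lemma superjet_minus_linear:
  fixes w :: "'a::real_inner \<Rightarrow> real"
  assumes "q \<in> superjet (\<lambda>u. w u - p \<bullet> u) x"
  shows "p + q \<in> superjet w x"
  using assms unfolding superjet_def by (simp add: algebra_simps)

lemma power2_norm_diff_split:
  fixes x x' y :: "'a::real_inner"
  shows "(norm (x' - y))\<^sup>2 = (norm (x - y))\<^sup>2 + (norm (x' - x))\<^sup>2 + 2 * ((x' - x) \<bullet> (x - y))"
  by (simp add: power2_norm_eq_inner inner_commute algebra_simps)

lemma superjet_at_penalized_max:
  fixes a :: "'a::real_inner \<Rightarrow> real"
  assumes "open V" "x \<in> V"
    and "\<And>x'. x' \<in> V \<Longrightarrow> a x' - c * (norm (x' - y))\<^sup>2 \<le> a x - c * (norm (x - y))\<^sup>2"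
  shows "(2 * c) *\<^sub>R (x - y) \<in> superjet a x"
proof (rule superjetI[OF assms(1,2)])
  fix x' assume "x' \<in> V"
  then show "a x' - a x - ((2 * c) *\<^sub>R (x - y)) \<bullet> (x' - x) \<le> c * (norm (x' - x))\<^sup>2"
    using assms(3)[of x'] power2_norm_diff_split[of x' y x]
    by (simp add: inner_commute algebra_simps)
qed

lemma subjet_at_penalized_min:
  fixes b :: "'a::real_inner \<Rightarrow> real"
  assumes "open V" "y \<in> V"
    and "\<And>y'. y' \<in> V \<Longrightarrow> b y + c * (norm (x - y))\<^sup>2 \<le> b y' + c * (norm (x - y'))\<^sup>2"
  shows "(2 * c) *\<^sub>R (x - y) \<in> subjet b y"
proof (rule subjetI[OF assms(1,2)])
  fix y' assume "y' \<in> V"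
  have eq: "(norm (x - y'))\<^sup>2 = (norm (x - y))\<^sup>2 + (norm (y' - y))\<^sup>2 - 2 * ((y' - y) \<bullet> (x - y))"
    using power2_norm_diff_split[of y' x y] by (simp add: norm_minus_commute inner_diff_right)
  have "((2 * c) *\<^sub>R (x - y)) \<bullet> (y' - y) = 2 * c * ((y' - y) \<bullet> (x - y))"
    by (simp add: inner_commute)
  moreover have "c * (norm (x - y'))\<^sup>2
      = c * (norm (x - y))\<^sup>2 + c * (norm (y' - y))\<^sup>2 - 2 * c * ((y' - y) \<bullet> (x - y))"
    unfolding eq by algebra
  ultimately show "- c * (norm (y' - y))\<^sup>2 \<le> b y' - b y - ((2 * c) *\<^sub>R (x - y)) \<bullet> (y' - y)"
    using assms(3)[OF \<open>y' \<in> V\<close>] by linarith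
qed

lemma jets_at_doubled_max:
  fixes w1 w2 :: "'a::real_inner \<Rightarrow> real"
  assumes "open V" "x \<in> V" "y \<in> V"
    and max: "\<And>x' y'. x' \<in> V \<Longrightarrow> y' \<in> V \<Longrightarrow>
      w1 x' - p \<bullet> x' - w2 y' - c * (norm (x' - y'))\<^sup>2 \<le> w1 x - p \<bullet> x - w2 y - c * (norm (x - y))\<^sup>2"
  shows "p + (2 * c) *\<^sub>R (x - y) \<in> superjet w1 x" and "(2 * c) *\<^sub>R (x - y) \<in> subjet w2 y"
proof -
  have "(2 * c) *\<^sub>R (x - y) \<in> superjet (\<lambda>u. w1 u - p \<bullet> u) x"
    using max[OF _ \<open>y \<in> V\<close>] by (intro superjet_at_penalized_max[OF assms(1,2)]) fastforce
  then show "p + (2 * c) *\<^sub>R (x - y) \<in> superjet w1 x"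
    by (rule superjet_minus_linear)
  show "(2 * c) *\<^sub>R (x - y) \<in> subjet w2 y"
    using max[OF \<open>x \<in> V\<close>] by (intro subjet_at_penalized_min[OF assms(1,3)]) fastforce
qed

lemma tendsto_0_if_real_mult_bounded:
  fixes a :: "nat \<Rightarrow> real"
  assumes "\<And>n. 0 \<le> a n" "\<And>n. real n * a n \<le> C"
  shows "a \<longlonglongrightarrow> 0"
proof (rule tendsto_sandwich[OF _ _ tendsto_const lim_const_over_n])
  show "\<forall>\<^sub>F n in sequentially. 0 \<le> a n"
    using assms(1) by simp
  show "\<forall>\<^sub>F n in sequentially. a n \<le> C / real n"
  proof (rule eventually_sequentiallyI)
    fix n :: nat assume "1 \<le> n"
    with assms(2)[of n] show "a n \<le> C / real n"
      by (simp add: field_simps)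
  qed
qed

lemma penalized_maximizers_converge:
  fixes g :: "'a::real_normed_vector \<times> 'a \<Rightarrow> real"
  assumes K: "compact K" and g: "continuous_on (K \<times> K) g"
    and uK: "\<And>n. u n \<in> K" and vK: "\<And>n. v n \<in> K"
    and lower: "\<And>n. A + real n * (norm (u n - v n))\<^sup>2 \<le> g (u n, v n)"
  obtains r ub where "strict_mono r" "ub \<in> K" "(u \<circ> r) \<longlonglongrightarrow> ub" "(v \<circ> r) \<longlonglongrightarrow> ub"
    "A \<le> g (ub, ub)"
proof -
  have KK: "compact (K \<times> K)" using K K by (rule compact_Times)
  obtain G where G: "\<And>z. z \<in> K \<times> K \<Longrightarrow> g z \<le> G"
    using continuous_attains_sup[OF KK _ g] uK vK by blast
  have gA: "A \<le> g (u n, v n)" for n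
  proof -
    have "0 \<le> real n * (norm (u n - v n))\<^sup>2" by simp
    then show ?thesis using lower[of n] by linarith
  qed
  have "(\<lambda>n. (norm (u n - v n))\<^sup>2) \<longlonglongrightarrow> 0"
  proof (rule tendsto_0_if_real_mult_bounded)
    show "real n * (norm (u n - v n))\<^sup>2 \<le> G - A" for n
      using lower[of n] G[of "(u n, v n)"] uK vK by fastforce
  qed simp
  obtain l r where l: "l \<in> K \<times> K" and r: "strict_mono r" "((\<lambda>n. (u n, v n)) \<circ> r) \<longlonglongrightarrow> l"
    using KK[unfolded compact_def, rule_format, of "\<lambda>n. (u n, v n)"] uK vK by auto
  have ur: "(u \<circ> r) \<longlonglongrightarrow> fst l" and vr: "(v \<circ> r) \<longlonglongrightarrow> snd l"
    using tendsto_fst[OF r(2)] tendsto_snd[OF r(2)] by (simp_all add: o_def)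
  have "(\<lambda>n. (norm ((u \<circ> r) n - (v \<circ> r) n))\<^sup>2) \<longlonglongrightarrow> (norm (fst l - snd l))\<^sup>2"
    by (intro tendsto_intros ur vr)
  moreover have "(\<lambda>n. (norm ((u \<circ> r) n - (v \<circ> r) n))\<^sup>2) \<longlonglongrightarrow> 0"
    using LIMSEQ_subseq_LIMSEQ[OF \<open>(\<lambda>n. (norm (u n - v n))\<^sup>2) \<longlonglongrightarrow> 0\<close> r(1)] by (simp add: o_def)
  ultimately have "snd l = fst l"
    using LIMSEQ_unique by fastforce
  then have l_diag: "l = (fst l, fst l)"
    by (metis prod.collapse)
  have "(\<lambda>n. g ((u \<circ> r) n, (v \<circ> r) n)) \<longlonglongrightarrow> g l"
    using continuous_on_tendsto_compose[OF g r(2) l] uK vK by (simp add: o_def mem_Times_iff)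
  then have "A \<le> g l"
    using gA by (intro tendsto_lowerbound) auto
  moreover have "fst l \<in> K" and "(v \<circ> r) \<longlonglongrightarrow> fst l"
    using l vr \<open>snd l = fst l\<close> by (auto simp: mem_Times_iff)
  ultimately show ?thesis
    using that[OF r(1) _ ur] l_diag by simp
qed

lemma penalized_maximizers:
  fixes g :: "'a::real_normed_vector \<times> 'a \<Rightarrow> real"
  assumes K: "compact K" and g: "continuous_on (K \<times> K) g" and "z0 \<in> K"
  obtains u v r ub where "\<And>n. u n \<in> K" "\<And>n. v n \<in> K"
    "\<And>n x y. x \<in> K \<Longrightarrow> y \<in> K \<Longrightarrow>
      g (x, y) - real n * (norm (x - y))\<^sup>2 \<le> g (u n, v n) - real n * (norm (u n - v n))\<^sup>2"
    "strict_mono r" "ub \<in> K" "(u \<circ> r) \<longlonglongrightarrow> ub" "(v \<circ> r) \<longlonglongrightarrow> ub" "g (z0, z0) \<le> g (ub, ub)"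
proof -
  define pen where "pen n z = g z - real n * (norm (fst z - snd z))\<^sup>2" for n z
  have "\<exists>z\<in>K \<times> K. \<forall>z'\<in>K \<times> K. pen n z' \<le> pen n z" for n
    unfolding pen_def using K \<open>z0 \<in> K\<close>
    by (intro continuous_attains_sup compact_Times continuous_intros g) auto
  then obtain z where zK: "\<And>n. z n \<in> K \<times> K" and z_max: "\<And>n z'. z' \<in> K \<times> K \<Longrightarrow> pen n z' \<le> pen n (z n)"
    by metis
  define u where "u n = fst (z n)" for n
  define v where "v n = snd (z n)" for n
  have uK: "u n \<in> K" and vK: "v n \<in> K" for n
    using zK[of n] by (auto simp: u_def v_def mem_Times_iff)
  have max: "g (x, y) - real n * (norm (x - y))\<^sup>2 \<le> g (u n, v n) - real n * (norm (u n - v n))\<^sup>2"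
    if "x \<in> K" "y \<in> K" for n x y
    using z_max[of "(x, y)" n] that by (simp add: pen_def u_def v_def)
  have "g (z0, z0) + real n * (norm (u n - v n))\<^sup>2 \<le> g (u n, v n)" for n
    using max[OF \<open>z0 \<in> K\<close> \<open>z0 \<in> K\<close>, of n] by simp
  then obtain r ub where "strict_mono r" "ub \<in> K" "(u \<circ> r) \<longlonglongrightarrow> ub" "(v \<circ> r) \<longlonglongrightarrow> ub"
    "g (z0, z0) \<le> g (ub, ub)"
    using penalized_maximizers_converge[of K g u v "g (z0, z0)"] K g uK vK by blast
  then show ?thesis
    using that[of u v r ub] uK vK max by blast
qed

lemma penalized_maximizers_interior:
  fixes g :: "'a::real_normed_vector \<times> 'a \<Rightarrow> real"
  assumes K: "compact K" and g: "continuous_on (K \<times> K) g"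
    and V: "open V" "V \<subseteq> K" and "z0 \<in> K"
    and outside: "\<forall>x\<in>K - V. g (x, x) < g (z0, z0)"
  obtains u v ub c where "\<And>n. u n \<in> V" "\<And>n. v n \<in> V" "ub \<in> V" "u \<longlonglongrightarrow> ub" "v \<longlonglongrightarrow> ub"
    "\<And>n x y. x \<in> K \<Longrightarrow> y \<in> K \<Longrightarrow>
      g (x, y) - c n * (norm (x - y))\<^sup>2 \<le> g (u n, v n) - c n * (norm (u n - v n))\<^sup>2"
proof -
  obtain u v r ub where "\<And>n. u n \<in> K" "\<And>n. v n \<in> K"
    and max: "\<And>n x y. x \<in> K \<Longrightarrow> y \<in> K \<Longrightarrow>
      g (x, y) - real n * (norm (x - y))\<^sup>2 \<le> g (u n, v n) - real n * (norm (u n - v n))\<^sup>2"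
    and "strict_mono r"
    and ub: "ub \<in> K" "(u \<circ> r) \<longlonglongrightarrow> ub" "(v \<circ> r) \<longlonglongrightarrow> ub" and g_ub: "g (z0, z0) \<le> g (ub, ub)"
    using penalized_maximizers[OF K g \<open>z0 \<in> K\<close>] by blast
  have "ub \<in> V"
  proof (rule ccontr)
    assume "ub \<notin> V"
    then have "g (ub, ub) < g (z0, z0)"
      using outside ub(1) by blast
    with g_ub show False
      by simp
  qed
  then obtain N where N: "\<And>n. N \<le> n \<Longrightarrow> u (r n) \<in> V \<and> v (r n) \<in> V"
    using eventually_conj[OF topological_tendstoD[OF ub(2) V(1)]
        topological_tendstoD[OF ub(3) V(1)]]
    by (auto simp: eventually_sequentially)
  have "(\<lambda>n. u (r (n + N))) \<longlonglongrightarrow> ub" "(\<lambda>n. v (r (n + N))) \<longlonglongrightarrow> ub"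
    using LIMSEQ_ignore_initial_segment[OF ub(2), of N]
      LIMSEQ_ignore_initial_segment[OF ub(3), of N] by (simp_all add: o_def)
  with N \<open>ub \<in> V\<close> show ?thesis
    by (intro that[of "\<lambda>n. u (r (n + N))" "\<lambda>n. v (r (n + N))" ub "\<lambda>n. real (r (n + N))"] max) auto
qed

lemma small_tilt:
  fixes e :: "'a::real_inner"
  assumes "bounded K" "0 < M"
  obtains \<delta> where "0 < \<delta>" "\<And>x y. x \<in> K \<Longrightarrow> y \<in> K \<Longrightarrow> \<delta> * (e \<bullet> (x - y)) < M"
proof -
  obtain B where B: "0 < B" "\<And>x. x \<in> K \<Longrightarrow> norm x \<le> B"
    using assms(1) bounded_pos by metis
  define \<delta> where "\<delta> = M / (4 * B * (norm e + 1))"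
  have "0 < \<delta>"
    using assms(2) B(1) by (auto simp: \<delta>_def intro!: divide_pos_pos mult_pos_pos add_nonneg_pos)
  moreover have "\<delta> * (e \<bullet> (x - y)) < M" if "x \<in> K" "y \<in> K" for x y
  proof -
    have "e \<bullet> (x - y) \<le> norm e * norm (x - y)"
      using Cauchy_Schwarz_ineq2[of e "x - y"] by linarith
    also have "\<dots> \<le> (norm e + 1) * (2 * B)"
      using B(2)[OF that(1)] B(2)[OF that(2)] norm_triangle_ineq4[of x y] by (intro mult_mono) auto
    finally have "\<delta> * (e \<bullet> (x - y)) \<le> \<delta> * ((norm e + 1) * (2 * B))"
      using \<open>0 < \<delta>\<close> by (intro mult_left_mono) auto
    also have "\<dots> = M / 2"
    proof -
      have "m / (4 * b * a) * (a * (2 * b)) = m / 2" if "a > 0" "b > 0" for a b m :: real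
        using that by (simp add: field_simps)
      from this[of "norm e + 1" B M] show ?thesis
        unfolding \<delta>_def using B(1) by (simp add: add_nonneg_pos)
    qed
    finally show ?thesis
      using assms(2) by simp
  qed
  ultimately show ?thesis
    using that by blast
qed

lemma doubling_variables:
  fixes w1 w2 :: "'a::euclidean_space \<Rightarrow> real"
  assumes V: "open V" "bounded V"
    and w1_cont: "continuous_on (closure V) w1" and w2_cont: "continuous_on (closure V) w2"
    and bdry: "\<forall>u\<in>frontier V. w1 u \<le> w2 u"
    and u0: "u0 \<in> V" "w2 u0 < w1 u0"
  obtains \<delta> ub u v q where "0 < \<delta>" "ub \<in> V" "\<And>n. u n \<in> V" "u \<longlonglongrightarrow> ub"
    "\<And>n. v n \<in> V" "v \<longlonglongrightarrow> ub"
    "\<And>n. \<delta> *\<^sub>R e + q n \<in> superjet w1 (u n)" "\<And>n. q n \<in> subjet w2 (v n)"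
proof -
  define K where "K = closure V"
  have K: "compact K" "V \<subseteq> K"
    using V by (auto simp: K_def closure_subset)
  have u0K: "u0 \<in> K"
    using K(2) u0(1) by blast
  obtain \<delta> where "0 < \<delta>"
    and tilt: "\<And>x y. x \<in> K \<Longrightarrow> y \<in> K \<Longrightarrow> \<delta> * (e \<bullet> (x - y)) < w1 u0 - w2 u0"
    using small_tilt[OF compact_imp_bounded[OF K(1)], of "w1 u0 - w2 u0" e] u0(2) by auto
  define g where "g z = w1 (fst z) - (\<delta> *\<^sub>R e) \<bullet> fst z - w2 (snd z)" for z :: "'a \<times> 'a"
  have g_cont: "continuous_on (K \<times> K) g"
    unfolding g_def K_def
    by (intro continuous_intros continuous_on_compose2[OF w1_cont]
        continuous_on_compose2[OF w2_cont]) (auto simp: mem_Times_iff)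
  have outside: "\<forall>x\<in>K - V. g (x, x) < g (u0, u0)"
  proof
    fix x assume "x \<in> K - V"
    have "w1 x \<le> w2 x"
      using bdry V(1) \<open>x \<in> K - V\<close> by (simp add: K_def frontier_def interior_open)
    then show "g (x, x) < g (u0, u0)"
      using tilt[OF u0K, of x] \<open>x \<in> K - V\<close> by (simp add: g_def algebra_simps)
  qed
  obtain u v ub c where in_V: "\<And>n. u n \<in> V" "\<And>n. v n \<in> V" and ub: "ub \<in> V" "u \<longlonglongrightarrow> ub" "v \<longlonglongrightarrow> ub"
    and max: "\<And>n x y. x \<in> K \<Longrightarrow> y \<in> K \<Longrightarrow>
      g (x, y) - c n * (norm (x - y))\<^sup>2 \<le> g (u n, v n) - c n * (norm (u n - v n))\<^sup>2"
    using penalized_maximizers_interior[OF K(1) g_cont V(1) K(2) u0K outside] by blast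
  have "\<delta> *\<^sub>R e + (2 * c n) *\<^sub>R (u n - v n) \<in> superjet w1 (u n)"
    and "(2 * c n) *\<^sub>R (u n - v n) \<in> subjet w2 (v n)" for n
  proof -
    have "w1 x - (\<delta> *\<^sub>R e) \<bullet> x - w2 y - c n * (norm (x - y))\<^sup>2
        \<le> w1 (u n) - (\<delta> *\<^sub>R e) \<bullet> u n - w2 (v n) - c n * (norm (u n - v n))\<^sup>2"
      if "x \<in> V" "y \<in> V" for x y
      using max[of x y n] K(2) that by (auto simp: g_def)
    from jets_at_doubled_max[OF V(1) in_V(1)[of n] in_V(2)[of n] this]
    show "\<delta> *\<^sub>R e + (2 * c n) *\<^sub>R (u n - v n) \<in> superjet w1 (u n)"
      and "(2 * c n) *\<^sub>R (u n - v n) \<in> subjet w2 (v n)"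
      by blast+
  qed
  then show ?thesis
    using that[of \<delta> ub u v "\<lambda>n. (2 * c n) *\<^sub>R (u n - v n)"] \<open>0 < \<delta>\<close> ub in_V by blast
qed

lemma tendsto_ereal_of_minus_tendsto_0:
  assumes "((\<lambda>n. a n - ereal c) \<longlongrightarrow> 0) F"
  shows "(a \<longlongrightarrow> ereal c) F"
proof -
  have "((\<lambda>n. (a n - ereal c) + ereal c) \<longlongrightarrow> 0 + ereal c) F"
    by (intro tendsto_add_ereal assms) auto
  moreover have "a n - ereal c + ereal c = a n" for n
    by (cases "a n") auto
  ultimately show ?thesis
    by simp
qed

definition subseq_cont_within :: "'a::topological_space set \<Rightarrow> ('a \<Rightarrow> ereal) \<Rightarrow> 'a \<Rightarrow> bool" where
  "subseq_cont_within V H ub \<longleftrightarrow> (\<forall>un. (\<forall>n. un n \<in> V) \<and> un \<longlonglongrightarrow> ub \<longrightarrow>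
     (\<exists>r. strict_mono r \<and> (\<lambda>n. H (un (r n)) - H ub) \<longlonglongrightarrow> 0))"

(* Subtraction in ereal is x + - y with \<infinity> + - \<infinity> = \<infinity>,
   so H ub - H ub = 0 forces H ub to be finite. *)
lemma subseq_cont_within_finite:
  assumes "subseq_cont_within V H ub" "ub \<in> V"
  obtains c where "H ub = ereal c"
proof -
  have "(\<lambda>n. H ub - H ub) \<longlonglongrightarrow> 0"
    using assms(1)[unfolded subseq_cont_within_def, rule_format, of "\<lambda>_. ub"] assms(2) by auto
  then have "H ub - H ub = 0"
    by (simp add: LIMSEQ_const_iff)
  then show ?thesis
    using that by (cases "H ub") auto
qed

lemma subseq_cont_within_no_gap:
  assumes H: "subseq_cont_within V H ub" "ub \<in> V"
    and u: "\<And>n. u n \<in> V" "u \<longlonglongrightarrow> ub" and v: "\<And>n. v n \<in> V" "v \<longlonglongrightarrow> ub"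
    and gap: "\<And>n. H (u n) + ereal \<delta> \<le> H (v n)" and "0 < \<delta>"
  shows False
proof -
  obtain c where c: "H ub = ereal c"
    using subseq_cont_within_finite[OF H] .
  obtain r1 where r1: "strict_mono r1" "(\<lambda>n. H (u (r1 n)) - H ub) \<longlonglongrightarrow> 0"
    using H(1)[unfolded subseq_cont_within_def, rule_format, of u] u by blast
  have "(\<lambda>n. v (r1 n)) \<longlonglongrightarrow> ub"
    using LIMSEQ_subseq_LIMSEQ[OF v(2) r1(1)] by (simp add: o_def)
  then obtain r2 where r2: "strict_mono r2" "(\<lambda>n. H (v (r1 (r2 n))) - H ub) \<longlonglongrightarrow> 0"
    using H(1)[unfolded subseq_cont_within_def, rule_format, of "\<lambda>n. v (r1 n)"] v(1) by blast
  have "(\<lambda>n. H (u (r1 (r2 n))) + ereal \<delta>) \<longlonglongrightarrow> ereal c + ereal \<delta>"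
    using LIMSEQ_subseq_LIMSEQ[OF r1(2) r2(1)] c
    by (intro tendsto_add_ereal tendsto_ereal_of_minus_tendsto_0) (auto simp: o_def)
  moreover have "(\<lambda>n. H (v (r1 (r2 n)))) \<longlonglongrightarrow> ereal c"
    using r2(2) c by (intro tendsto_ereal_of_minus_tendsto_0) simp
  ultimately have "ereal c + ereal \<delta> \<le> ereal c"
    using gap by (intro LIMSEQ_le) auto
  with \<open>0 < \<delta>\<close> show False
    by simp
qed

lemma visc_hamil_gap:
  assumes "visc_sub f Phi d V w1" "visc_super f Phi d V w2" "x \<in> V" "y \<in> V"
    and "p + q \<in> superjet w1 x" "q \<in> subjet w2 y"
  shows "hamil f Phi x d + ereal (- (p \<bullet> d)) \<le> hamil f Phi y d"
proof -
  have "- ereal ((p + q) \<bullet> d) + hamil f Phi x d \<le> 0"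
    using assms(1,3,5) unfolding visc_sub_def by blast
  moreover have "0 \<le> - ereal (q \<bullet> d) + hamil f Phi y d"
    using assms(2,4,6) unfolding visc_super_def by blast
  ultimately show ?thesis
    by (cases "hamil f Phi x d"; cases "hamil f Phi y d") (auto simp: inner_add_left)
qed

theorem mainTheorem7:
  fixes f :: "'x::banach \<Rightarrow> real^'m \<Rightarrow> real"
    and Phi :: "real^'m \<Rightarrow> 'x set"
    and X :: "'x set"
    and U U1 :: "(real^'m) set"
    and w1 w2 :: "real^'m \<Rightarrow> real"
  assumes X_ne: "X \<noteq> {}"
    and Phi_X: "\<forall>u\<in>U. Phi u \<subseteq> X"
    and U_open: "open U"
    and U1_open: "open U1" and U1_bdd: "bounded U1" and U1_cpt_in: "closure U1 \<subseteq> U"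
    and dd_exists: "\<forall>x\<in>X. \<forall>u\<in>U. \<forall>d. norm d = 1 \<longrightarrow>
        (\<exists>L. ((\<lambda>s::real. (f x (u + s *\<^sub>R d) - f x u) / s) \<longlongrightarrow> L) (at_right 0))"
    and cont_cond: "\<forall>ub\<in>closure U1. \<forall>(dn::nat \<Rightarrow> real^'m) un.
        (\<forall>n. norm (dn n) = 1) \<and> (\<forall>n. un n \<in> U1) \<and> un \<longlonglongrightarrow> ub \<longrightarrow>
        (\<exists>r. strict_mono r \<and>
          ((\<lambda>n. hamil f Phi (un (r n)) (dn (r n)) - hamil f Phi ub (dn (r n))) \<longlongrightarrow> 0) sequentially)"
    and w1_cont: "continuous_on (closure U1) w1"
    and w2_cont: "continuous_on (closure U1) w2"
    and w1_sub: "\<forall>d. norm d = 1 \<longrightarrow> visc_sub f Phi d U1 w1"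
    and w2_super: "\<forall>d. norm d = 1 \<longrightarrow> visc_super f Phi d U1 w2"
    and bdry: "\<forall>u\<in>frontier U1. w1 u \<le> w2 u"
  shows "\<forall>u\<in>U1. w1 u \<le> w2 u"
proof (rule ccontr)
  assume "\<not> (\<forall>u\<in>U1. w1 u \<le> w2 u)"
  then obtain u0 where u0: "u0 \<in> U1" "w2 u0 < w1 u0"
    by force
  obtain e :: "real^'m" where e: "norm e = 1"
    using vector_choose_size[of 1] by auto
  obtain \<delta> ub u v q where "0 < \<delta>" "ub \<in> U1" and u: "\<And>n. u n \<in> U1" "u \<longlonglongrightarrow> ub"
    and v: "\<And>n. v n \<in> U1" "v \<longlonglongrightarrow> ub"
    and jets: "\<And>n. \<delta> *\<^sub>R e + q n \<in> superjet w1 (u n)" "\<And>n. q n \<in> subjet w2 (v n)"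
    using doubling_variables[OF U1_open U1_bdd w1_cont w2_cont bdry u0, where e = e] by blast
  define H where "H y = hamil f Phi y (- e)" for y
  have ne: "norm (- e) = 1" and ee: "e \<bullet> e = 1"
    using e by (simp_all add: power2_norm_eq_inner[symmetric])
  have "subseq_cont_within U1 H ub"
    unfolding subseq_cont_within_def
  proof (intro allI impI)
    fix un assume "(\<forall>n. un n \<in> U1) \<and> un \<longlonglongrightarrow> ub"
    then show "\<exists>r. strict_mono r \<and> (\<lambda>n. H (un (r n)) - H ub) \<longlonglongrightarrow> 0"
      using cont_cond[rule_format, of ub "\<lambda>_. - e" un] \<open>ub \<in> U1\<close> ne closure_subset
      by (auto simp: H_def)
  qed
  moreover have "H (u n) + ereal \<delta> \<le> H (v n)" for n
    using visc_hamil_gap[OF w1_sub[rule_format, OF ne] w2_super[rule_format, OF ne]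
        u(1)[of n] v(1)[of n] jets(1)[of n] jets(2)[of n]] ee
    by (simp add: H_def)
  ultimately show False
    by (rule subseq_cont_within_no_gap[OF _ \<open>ub \<in> U1\<close> u v _ \<open>0 < \<delta>\<close>])
qed

end
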